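(* For the SVIQS system, assume $\omega\ge\eta=\gamma$. If $R_0<1$, then the disease-free equilibrium $E^0$ is globally asymptotically stable: it is Lyapunov stable, and every solution with initial data satisfying $S_k(0),V_k(0),I_k(0),Q_k(0)\ge0$ and $S_k(0)+V_k(0)+I_k(0)+Q_k(0)=N_k^*$ for all $k$ converges to $E^0$ as $t\to\infty$.
   Context: Fix an integer $n\ge1$ and numbers $p(1),\dots,p(n)>0$ with $\sum_{k=1}^n p(k)=1$; set $\langle k\rangle=\sum_{k=1}^n kp(k)$. Fix constants $b>d>0$ and let $\Phi^*>0$ satisfy $\Phi^*=\frac{1}{\langle k\rangle}\sum_{i=1}^n \frac{i\,p(i)\,b\Phi^*}{d+bi\Phi^*}$. For $k=1,\dots,n$ put $N_k^*=\frac{bk\Phi^*}{d+bk\Phi^*}\in(0,1)$ and $\Lambda_k=bk(1-N_k^* )\Phi^*$ (so $\Lambda_k=dN_k^*>0$). Parameters: $\lambda(k)>0$, $\varphi(k)>0$, $\mu_k>0$ for $k=1,\dots,n$; constants $\beta,\gamma,\eta,\omega>0$ and $\delta\in[0,1]$. For functions $I_1(t),\dots,I_n(t)$ set $\Theta(t)=\frac{1}{\langle k\rangle}\sum_{i=1}^n\varphi(i)p(i)I_i(t)$. The SVIQS system is, for $k=1,\dots,n$: $S_k'=\Lambda_k-\lambda(k)S_k\Theta+\gamma I_k+\eta Q_k+\omega V_k-(\mu_k+d)S_k$, $V_k'=\mu_kS_k-\delta\lambda(k)V_k\Theta-(d+\omega)V_k$, $I_k'=\lambda(k)S_k\Theta+\delta\lambda(k)V_k\Theta-(\gamma+\beta+d)I_k$,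 $Q_k'=\beta I_k-(\eta+d)Q_k$. Its disease-free equilibrium $E^0$ is $S_k^0=\frac{(d+\omega)N_k^*}{\mu_k+\omega+d}$, $V_k^0=\frac{\mu_kN_k^*}{\mu_k+\omega+d}$, $I_k^0=Q_k^0=0$, and its basic reproduction number is $R_0=\frac{1}{\langle k\rangle}\sum_{i=1}^n\frac{\lambda(i)\varphi(i)p(i)\Lambda_i(\omega+d+\delta\mu_i)}{d(\gamma+\beta+d)(\omega+\mu_i+d)}$. *)

theory Defs
  imports "HOL-Analysis.Analysis"
begin

text \<open>Degree classes are indexed by k = 1..n; all functions below are of type nat => real.\<close>

definition avg_deg :: "nat \<Rightarrow> (nat \<Rightarrow> real) \<Rightarrow> real" where
  "avg_deg n p = (\<Sum>k=1..n. real k * p k)"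

definition Nstar :: "real \<Rightarrow> real \<Rightarrow> real \<Rightarrow> nat \<Rightarrow> real" where
  "Nstar b d Phi k = b * real k * Phi / (d + b * real k * Phi)"

definition Lam :: "real \<Rightarrow> real \<Rightarrow> real \<Rightarrow> nat \<Rightarrow> real" where
  "Lam b d Phi k = b * real k * (1 - Nstar b d Phi k) * Phi"

definition Theta :: "nat \<Rightarrow> (nat \<Rightarrow> real) \<Rightarrow> (nat \<Rightarrow> real) \<Rightarrow> (nat \<Rightarrow> real) \<Rightarrow> real" where
  "Theta n p phi I = (1 / avg_deg n p) * (\<Sum>i=1..n. phi i * p i * I i)"

definition R0 :: "nat \<Rightarrow> (nat \<Rightarrow> real) \<Rightarrow> real \<Rightarrow> real \<Rightarrow> real \<Rightarrow> (nat \<Rightarrow> real) \<Rightarrow>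
    (nat \<Rightarrow> real) \<Rightarrow> (nat \<Rightarrow> real) \<Rightarrow> real \<Rightarrow> real \<Rightarrow> real \<Rightarrow> real \<Rightarrow> real" where
  "R0 n p b d Phi lam phi mu beta gamma omega delta =
     (1 / avg_deg n p) * (\<Sum>i=1..n. lam i * phi i * p i * Lam b d Phi i * (omega + d + delta * mu i)
        / (d * (gamma + beta + d) * (omega + mu i + d)))"

definition S0 :: "real \<Rightarrow> real \<Rightarrow> real \<Rightarrow> (nat \<Rightarrow> real) \<Rightarrow> real \<Rightarrow> nat \<Rightarrow> real" where
  "S0 b d Phi mu omega k = (d + omega) * Nstar b d Phi k / (mu k + omega + d)"

definition V0 :: "real \<Rightarrow> real \<Rightarrow> real \<Rightarrow> (nat \<Rightarrow> real) \<Rightarrow> real \<Rightarrow> nat \<Rightarrow> real" where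
  "V0 b d Phi mu omega k = mu k * Nstar b d Phi k / (mu k + omega + d)"

definition sviqs_solution ::
  "nat \<Rightarrow> (nat \<Rightarrow> real) \<Rightarrow> real \<Rightarrow> real \<Rightarrow> real \<Rightarrow> (nat \<Rightarrow> real) \<Rightarrow> (nat \<Rightarrow> real) \<Rightarrow>
   (nat \<Rightarrow> real) \<Rightarrow> real \<Rightarrow> real \<Rightarrow> real \<Rightarrow> real \<Rightarrow> real \<Rightarrow>
   (real \<Rightarrow> nat \<Rightarrow> real) \<Rightarrow> (real \<Rightarrow> nat \<Rightarrow> real) \<Rightarrow> (real \<Rightarrow> nat \<Rightarrow> real) \<Rightarrow> (real \<Rightarrow> nat \<Rightarrow> real) \<Rightarrow> bool"
  where
  "sviqs_solution n p b d Phi lam phi mu beta gamma eta omega delta S V I Q \<longleftrightarrow>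
    (\<forall>t\<ge>0. \<forall>k\<in>{1..n}.
      ((\<lambda>s. S s k) has_real_derivative
         (Lam b d Phi k - lam k * S t k * Theta n p phi (I t) + gamma * I t k + eta * Q t k
          + omega * V t k - (mu k + d) * S t k)) (at t within {0..}) \<and>
      ((\<lambda>s. V s k) has_real_derivative
         (mu k * S t k - delta * lam k * V t k * Theta n p phi (I t) - (d + omega) * V t k))
         (at t within {0..}) \<and>
      ((\<lambda>s. I s k) has_real_derivative
         (lam k * S t k * Theta n p phi (I t) + delta * lam k * V t k * Theta n p phi (I t)
          - (gamma + beta + d) * I t k)) (at t within {0..}) \<and>
      ((\<lambda>s. Q s k) has_real_derivative (beta * I t k - (eta + d) * Q t k)) (at t within {0..}))"

definition sviqs_admissible ::
  "nat \<Rightarrow> (nat \<Rightarrow> real) \<Rightarrow> (nat \<Rightarrow> real) \<Rightarrow> (nat \<Rightarrow> real) \<Rightarrow> (nat \<Rightarrow> real) \<Rightarrow> (nat \<Rightarrow> real) \<Rightarrow> bool"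
  where
  "sviqs_admissible n Ns S V I Q \<longleftrightarrow>
    (\<forall>k\<in>{1..n}. S k \<ge> 0 \<and> V k \<ge> 0 \<and> I k \<ge> 0 \<and> Q k \<ge> 0 \<and> S k + V k + I k + Q k = Ns k)"

definition dist_dfe ::
  "nat \<Rightarrow> (nat \<Rightarrow> real) \<Rightarrow> (nat \<Rightarrow> real) \<Rightarrow> (nat \<Rightarrow> real) \<Rightarrow> (nat \<Rightarrow> real) \<Rightarrow> (nat \<Rightarrow> real) \<Rightarrow> (nat \<Rightarrow> real) \<Rightarrow> real"
  where
  "dist_dfe n S0v V0v S V I Q = (\<Sum>k=1..n. \<bar>S k - S0v k\<bar> + \<bar>V k - V0v k\<bar> + \<bar>I k\<bar> + \<bar>Q k\<bar>)"

end

theory Submission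
  imports Defs
begin

text \<open>
The total population of each degree class obeys N' = d (N^* - N), so it stays equal to N_k^*, and the
feasible region is invariant; the hypothesis omega >= gamma = eta is what makes S' > 0 wherever S vanishes.
The deviations x = S - S^0 and y = V - V^0 satisfy the linear differential inequalities
y' <= -(mu + d + omega) y and x' <= -(mu + d + gamma) x + (omega - gamma) y, so their upper limits are
nonpositive. The weighted infection level Theta solves Theta' = (g - (gamma + beta + d)) Theta, and by the
bounds on x and y the gain g eventually exceeds its equilibrium value (gamma + beta + d) R0 by as little as
we like; as R0 < 1, Theta, I and Q tend to 0, and the conservation law x + y + I + Q = 0 turns the upper
bounds on x and y into lower bounds. Run with explicit constants, the same comparison arguments bound every deviation by a
multiple of the initial distance from the equilibrium, which gives Lyapunov stability.
\<close>

section \<open>Scalar differential inequalities\<close>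

lemma linear_diff_ineq_exp_bound:
  fixes f f' :: "real \<Rightarrow> real"
  assumes \<kappa>: "\<kappa> > 0" and T: "T \<ge> 0"
    and deriv: "\<And>t. t \<ge> T \<Longrightarrow> (f has_real_derivative f' t) (at t within {0..})"
    and ineq: "\<And>t. t \<ge> T \<Longrightarrow> f' t \<le> -\<kappa> * f t + B"
    and t: "t \<ge> T"
  shows "f t \<le> B/\<kappa> + (f T - B/\<kappa>) * exp (-\<kappa> * (t - T))"
proof -
  define w where "w s = (f s - B/\<kappa>) * exp (\<kappa> * (s - T))" for s
  define w' where "w' s = (f' s + \<kappa> * f s - B) * exp (\<kappa> * (s - T))" for s
  have w_deriv: "(w has_real_derivative w' s) (at s within {T..t})" if "T \<le> s" for s
  proof -
    have f_deriv: "(f has_real_derivative f' s) (at s within {T..t})"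
      by (rule DERIV_subset[OF deriv]) (use that T in auto)
    have "(w has_real_derivative
        f' s * exp (\<kappa> * (s - T)) + (f s - B/\<kappa>) * (exp (\<kappa> * (s - T)) * (\<kappa> * 1))) (at s within {T..t})"
      unfolding w_def by (rule derivative_eq_intros f_deriv refl | simp)+
    moreover have "f' s * exp (\<kappa> * (s - T)) + (f s - B/\<kappa>) * (exp (\<kappa> * (s - T)) * (\<kappa> * 1)) = w' s"
      using \<kappa> by (simp add: w'_def field_simps)
    ultimately show ?thesis by simp
  qed
  obtain s where s: "s \<in> {T..t}" "w t - w T = w' s * (t - T)"
    using mvt_very_simple[OF t, of w "\<lambda>s h. w' s * h"] w_deriv
    by (auto simp: has_field_derivative_def)
  have "w' s \<le> 0"
    using ineq[of s] s(1) unfolding w'_def by (intro mult_nonpos_nonneg) auto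
  then have "w' s * (t - T) \<le> 0"
    using t by (simp add: mult_nonpos_nonneg)
  then have "w t \<le> w T"
    using s(2) by simp
  then have "(f t - B/\<kappa>) * exp (\<kappa> * (t - T)) * exp (-\<kappa> * (t - T)) \<le> (f T - B/\<kappa>) * exp (-\<kappa> * (t - T))"
    by (simp add: w_def mult_right_mono)
  then show ?thesis
    by (simp add: mult.assoc flip: exp_add)
qed

lemma linear_diff_ineq_bound:
  fixes f f' :: "real \<Rightarrow> real"
  assumes \<kappa>: "\<kappa> > 0"
    and deriv: "\<And>t. t \<ge> 0 \<Longrightarrow> (f has_real_derivative f' t) (at t within {0..})"
    and ineq: "\<And>t. t \<ge> 0 \<Longrightarrow> f' t \<le> -\<kappa> * f t + B"
    and t: "t \<ge> 0"
  shows "f t \<le> max (f 0) (B/\<kappa>)"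
proof -
  have bound: "f t \<le> B/\<kappa> + (f 0 - B/\<kappa>) * exp (-\<kappa> * t)"
    using linear_diff_ineq_exp_bound[OF \<kappa> order.refl deriv ineq t] by simp
  have "exp (-\<kappa> * t) \<le> 1"
    using \<kappa> t by simp
  then have "(f 0 - B/\<kappa>) * exp (-\<kappa> * t) \<le> max 0 (f 0 - B/\<kappa>)"
    by (cases "f 0 - B/\<kappa> \<ge> 0") (auto simp: mult_left_le mult_nonpos_nonneg)
  with bound show ?thesis
    by linarith
qed

lemma max_le_one_plus_mult:
  fixes x y c D :: real
  assumes "x \<le> D" "y \<le> c * D" "0 \<le> c" "0 \<le> D"
  shows "max x y \<le> (1 + c) * D"
proof -
  have "0 \<le> c * D"
    using assms(3,4) by simp
  with assms show ?thesis
    unfolding distrib_right mult_1_left by (intro max.boundedI) linarith+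
qed

lemma diff_ineq_preserves_nonneg:
  fixes f f' :: "real \<Rightarrow> real"
  assumes a: "0 \<le> a" and ab: "a \<le> b"
    and deriv: "\<And>t. t \<in> {a..b} \<Longrightarrow> (f has_real_derivative f' t) (at t within {0..})"
    and fa: "f a \<ge> 0"
    and ineq: "\<And>t. t \<in> {a..b} \<Longrightarrow> f t < 0 \<Longrightarrow> f' t \<ge> M * f t"
  shows "f b \<ge> 0"
proof (rule ccontr)
  assume fb: "\<not> f b \<ge> 0"
  have deriv': "(f has_real_derivative f' t) (at t within {a..b})" if "t \<in> {a..b}" for t
    by (rule DERIV_subset[OF deriv[OF that]]) (use a in auto)
  have cont: "continuous_on {a..b} f"
    by (rule DERIV_continuous_on[OF deriv'])
  define A where "A = {a..b} \<inter> f -` {0..}"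
  have "closed A"
    unfolding A_def by (rule continuous_closed_preimage[OF cont]) auto
  moreover have "a \<in> A" and bdd: "bdd_above A"
    using ab fa by (auto simp: A_def intro: bdd_aboveI[of _ b])
  ultimately have "Sup A \<in> A"
    by (intro closed_contains_Sup) auto
  then obtain s where s: "s = Sup A" "a \<le> s" "s \<le> b" "f s \<ge> 0"
    by (auto simp: A_def)
  have sb: "s < b"
    using s fb by (cases "s = b") auto
  have neg: "f x < 0" if "s < x" "x \<le> b" for x
    using that s cSup_upper[OF _ bdd, of x] by (force simp: A_def)
  define w where "w x = f x * exp (-M*x)" for x
  have "w s \<le> w b"
  proof (rule DERIV_nonneg_imp_increasing_open[OF less_imp_le[OF sb]])
    fix x assume x: "s < x" "x < b"
    have f_deriv: "(f has_real_derivative f' x) (at x)"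
      using deriv'[of x] x s at_within_Icc_at[of a x b] by auto
    have "(w has_real_derivative f' x * exp (-M*x) + f x * (exp (-M*x) * (-M * 1))) (at x)"
      unfolding w_def by (rule derivative_eq_intros f_deriv refl | simp)+
    then have "(w has_real_derivative (f' x - M * f x) * exp (-M*x)) (at x)"
      by (simp add: algebra_simps)
    moreover have "(f' x - M * f x) * exp (-M*x) \<ge> 0"
      using ineq[of x] neg[of x] x s by auto
    ultimately show "\<exists>y. (w has_real_derivative y) (at x) \<and> y \<ge> 0"
      by blast
  next
    show "continuous_on {s..b} w"
      unfolding w_def using s by (intro continuous_intros continuous_on_subset[OF cont]) auto
  qed
  moreover have "w s \<ge> 0" "w b < 0"
    using s fb by (auto simp: w_def mult_neg_pos)
  ultimately show False
    by simp
qed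

lemma pos_right_of_deriv:
  fixes f :: "real \<Rightarrow> real"
  assumes deriv: "(f has_real_derivative D) (at T within {0..})" and T: "T \<ge> 0"
    and sign: "f T > 0 \<or> (f T = 0 \<and> D > 0)"
  shows "\<exists>\<epsilon>>0. \<forall>s\<in>{T<..<T+\<epsilon>}. f s > 0"
  using sign
proof
  assume "f T > 0"
  moreover have "(f \<longlongrightarrow> f T) (at T within {0..})"
    using DERIV_continuous[OF deriv] by (simp add: continuous_within)
  ultimately have "eventually (\<lambda>s. f s > 0) (at T within {0..})"
    using order_tendstoD(1) by blast
  then obtain \<epsilon> where "\<epsilon> > 0" "\<And>s. s \<in> {0..} \<Longrightarrow> s \<noteq> T \<Longrightarrow> dist s T < \<epsilon> \<Longrightarrow> f s > 0"
    unfolding eventually_at by blast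
  then show ?thesis
    using T by (intro exI[of _ \<epsilon>]) (auto simp: dist_real_def)
next
  assume "f T = 0 \<and> D > 0"
  then obtain \<epsilon> where \<epsilon>: "\<epsilon> > 0"
    and inc: "\<And>h. h > 0 \<Longrightarrow> T + h \<in> {0..} \<Longrightarrow> h < \<epsilon> \<Longrightarrow> f (T + h) > 0"
    using has_real_derivative_pos_inc_right[OF deriv] by force
  have "f s > 0" if "s \<in> {T<..<T+\<epsilon>}" for s
    using inc[of "s - T"] that T by simp
  with \<epsilon> show ?thesis
    by blast
qed

lemma halfline_continuation:
  fixes P :: "real \<Rightarrow> bool"
  assumes closed_step: "\<And>t. t \<ge> 0 \<Longrightarrow> \<forall>s\<in>{0..<t}. P s \<Longrightarrow> P t"
    and open_step: "\<And>t. t \<ge> 0 \<Longrightarrow> \<forall>s\<in>{0..t}. P s \<Longrightarrow> \<exists>\<epsilon>>0. \<forall>s\<in>{t<..<t+\<epsilon>}. P s"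
    and t: "t \<ge> 0"
  shows "P t"
proof (rule ccontr)
  assume "\<not> P t"
  define B where "B = {s. 0 \<le> s \<and> \<not> P s}"
  have B: "B \<noteq> {}" "bdd_below B"
    using \<open>\<not> P t\<close> t by (auto simp: B_def intro: bdd_belowI[of _ 0])
  define T where "T = Inf B"
  have T: "T \<ge> 0"
    unfolding T_def by (rule cInf_greatest[OF B(1)]) (auto simp: B_def)
  have below: "P s" if "0 \<le> s" "s < T" for s
  proof (rule ccontr)
    assume "\<not> P s"
    with that have "T \<le> s"
      unfolding T_def by (intro cInf_lower[OF _ B(2)]) (simp add: B_def)
    with that show False
      by simp
  qed
  then have "P T"
    using closed_step[OF T] by simp
  with below have "\<forall>s\<in>{0..T}. P s"
    by (auto simp: le_less)
  then obtain \<epsilon> where \<epsilon>: "\<epsilon> > 0" "\<forall>s\<in>{T<..<T+\<epsilon>}. P s"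
    using open_step[OF T] by blast
  have "T + \<epsilon> \<le> s" if "s \<in> B" for s
  proof (rule ccontr)
    assume "\<not> T + \<epsilon> \<le> s"
    moreover have "0 \<le> s" "\<not> P s"
      using that by (simp_all add: B_def)
    ultimately show False
      using below \<open>P T\<close> \<epsilon>(2) by (cases s T rule: linorder_cases) auto
  qed
  then have "T + \<epsilon> \<le> T"
    unfolding T_def by (intro cInf_greatest[OF B(1)]) (simp add: T_def)
  with \<epsilon> show False
    by simp
qed

section \<open>Nonpositive upper limits at infinity\<close>

definition limsup_nonpos :: "(real \<Rightarrow> real) \<Rightarrow> bool" where
  "limsup_nonpos f \<longleftrightarrow> (\<forall>e>0. eventually (\<lambda>t. f t \<le> e) at_top)"

lemma limsup_nonposI:
  "(\<And>e. e > 0 \<Longrightarrow> eventually (\<lambda>t. f t \<le> e) at_top) \<Longrightarrow> limsup_nonpos f"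
  by (simp add: limsup_nonpos_def)

lemma limsup_nonposD:
  "limsup_nonpos f \<Longrightarrow> e > 0 \<Longrightarrow> eventually (\<lambda>t. f t \<le> e) at_top"
  by (simp add: limsup_nonpos_def)

lemma limsup_nonpos_zero: "limsup_nonpos (\<lambda>t. 0)"
  by (simp add: limsup_nonpos_def)

lemma limsup_nonpos_mono:
  assumes "eventually (\<lambda>t. f t \<le> g t) at_top" and "limsup_nonpos g"
  shows "limsup_nonpos f"
proof (rule limsup_nonposI)
  fix e :: real assume "e > 0"
  with assms show "eventually (\<lambda>t. f t \<le> e) at_top"
    by (auto elim: eventually_mono[OF eventually_conj] dest: limsup_nonposD)
qed

lemma limsup_nonpos_add:
  assumes "limsup_nonpos f" and "limsup_nonpos g"
  shows "limsup_nonpos (\<lambda>t. f t + g t)"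
proof (rule limsup_nonposI)
  fix e :: real assume "e > 0"
  then have "eventually (\<lambda>t. f t \<le> e/2 \<and> g t \<le> e/2) at_top"
    using assms by (intro eventually_conj limsup_nonposD) auto
  then show "eventually (\<lambda>t. f t + g t \<le> e) at_top"
    by eventually_elim simp
qed

lemma limsup_nonpos_cmult:
  assumes "c \<ge> 0" and "limsup_nonpos f"
  shows "limsup_nonpos (\<lambda>t. c * f t)"
proof (rule limsup_nonposI)
  fix e :: real assume e: "e > 0"
  have "eventually (\<lambda>t. f t \<le> e / (c + 1)) at_top"
    using assms e by (intro limsup_nonposD) auto
  then show "eventually (\<lambda>t. c * f t \<le> e) at_top"
  proof eventually_elim
    case (elim t)
    have "c * f t \<le> c * (e / (c + 1))"
      using elim assms(1) by (rule mult_left_mono)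
    also have "\<dots> \<le> e"
      using assms(1) e by (simp add: field_simps)
    finally show ?case .
  qed
qed

lemma limsup_nonpos_sum:
  assumes "\<And>i. i \<in> A \<Longrightarrow> limsup_nonpos (f i)"
  shows "limsup_nonpos (\<lambda>t. \<Sum>i\<in>A. f i t)"
  using assms
  by (induction A rule: infinite_finite_induct) (auto intro: limsup_nonpos_zero limsup_nonpos_add)

lemma tendsto_zero_if_limsup_nonpos:
  assumes "limsup_nonpos f" and "limsup_nonpos (\<lambda>t. - f t)"
  shows "(f \<longlongrightarrow> 0) at_top"
proof (rule order_tendstoI)
  fix a :: real assume "a < 0"
  then have "eventually (\<lambda>t. - f t \<le> - a/2) at_top"
    using assms(2) by (intro limsup_nonposD) auto
  then show "eventually (\<lambda>t. a < f t) at_top"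
    by eventually_elim (use \<open>a < 0\<close> in auto)
next
  fix a :: real assume "0 < a"
  then have "eventually (\<lambda>t. f t \<le> a/2) at_top"
    using assms(1) by (intro limsup_nonposD) auto
  then show "eventually (\<lambda>t. f t < a) at_top"
    by eventually_elim (use \<open>0 < a\<close> in auto)
qed

lemma linear_diff_ineq_limsup_nonpos:
  fixes f f' g :: "real \<Rightarrow> real"
  assumes \<kappa>: "\<kappa> > 0"
    and deriv: "\<And>t. t \<ge> 0 \<Longrightarrow> (f has_real_derivative f' t) (at t within {0..})"
    and ineq: "eventually (\<lambda>t. f' t \<le> -\<kappa> * f t + g t) at_top"
    and g: "limsup_nonpos g"
  shows "limsup_nonpos f"
proof (rule limsup_nonposI)
  fix e :: real assume e: "e > 0"
  have "eventually (\<lambda>t. f' t \<le> -\<kappa> * f t + g t \<and> g t \<le> \<kappa> * e / 2) at_top"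
    using ineq limsup_nonposD[OF g, of "\<kappa> * e / 2"] \<kappa> e by (auto intro: eventually_conj)
  then obtain N where N: "\<And>t. t \<ge> N \<Longrightarrow> f' t \<le> -\<kappa> * f t + \<kappa> * e / 2"
    unfolding eventually_at_top_linorder by force
  define T where "T = max N 0"
  have bound: "f t \<le> e/2 + (f T - e/2) * exp (-\<kappa> * (t - T))" if "t \<ge> T" for t
    using linear_diff_ineq_exp_bound[of \<kappa> T f f' "\<kappa> * e / 2" t] \<kappa> deriv N that
    by (simp add: T_def)
  have "((\<lambda>t. (f T - e/2) * exp (-\<kappa> * (t - T))) \<longlongrightarrow> 0) at_top"
  proof (intro tendsto_mult_right_zero filterlim_compose[OF exp_at_bot])
    have "filterlim (\<lambda>t. - T + t) at_top at_top"
      by (rule filterlim_tendsto_add_at_top[OF tendsto_const filterlim_ident])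
    then have "filterlim (\<lambda>t. t - T) at_top at_top"
      by simp
    then show "filterlim (\<lambda>t. -\<kappa> * (t - T)) at_bot at_top"
      using \<kappa> by (intro filterlim_tendsto_neg_mult_at_bot[OF tendsto_const]) auto
  qed
  then have "eventually (\<lambda>t. (f T - e/2) * exp (-\<kappa> * (t - T)) < e/2) at_top"
    using e by (intro order_tendstoD) auto
  then show "eventually (\<lambda>t. f t \<le> e) at_top"
    using eventually_ge_at_top[of T] by eventually_elim (use bound in force)
qed

section \<open>The SVIQS model and its disease-free equilibrium\<close>

locale sviqs_params =
  fixes n :: nat and p :: "nat \<Rightarrow> real" and b d Phi :: real
    and lam phi mu :: "nat \<Rightarrow> real" and beta gamma eta omega delta :: real
  assumes n: "n \<ge> 1"
    and p_pos: "\<And>k. k \<in> {1..n} \<Longrightarrow> p k > 0"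
    and b_pos: "b > 0" and d_pos: "d > 0"
    and Phi_pos: "Phi > 0"
    and lam_pos: "\<And>k. k \<in> {1..n} \<Longrightarrow> lam k > 0"
    and phi_pos: "\<And>k. k \<in> {1..n} \<Longrightarrow> phi k > 0"
    and mu_pos: "\<And>k. k \<in> {1..n} \<Longrightarrow> mu k > 0"
    and beta_pos: "beta > 0" and gamma_pos: "gamma > 0"
    and delta: "0 \<le> delta" "delta \<le> 1"
    and eta_eq_gamma: "eta = gamma" and gamma_le_omega: "gamma \<le> omega"
    and R0_lt_1: "R0 n p b d Phi lam phi mu beta gamma omega delta < 1"
begin

abbreviation "Ns \<equiv> Nstar b d Phi"
abbreviation "Sdfe \<equiv> S0 b d Phi mu omega"
abbreviation "Vdfe \<equiv> V0 b d Phi mu omega"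
abbreviation "kmean \<equiv> avg_deg n p"
abbreviation "I_exit_rate \<equiv> gamma + beta + d"

lemma omega_pos: "omega > 0"
  using gamma_pos gamma_le_omega by simp

lemma I_exit_rate_pos: "I_exit_rate > 0"
  using gamma_pos beta_pos d_pos by simp

lemma kmean_pos: "kmean > 0"
  unfolding avg_deg_def using n p_pos by (intro sum_pos) auto

lemma Nstar_nonneg: "Ns k \<ge> 0"
  using b_pos d_pos Phi_pos by (simp add: Nstar_def)

lemma Nstar_pos: "k \<in> {1..n} \<Longrightarrow> Ns k > 0"
  using b_pos d_pos Phi_pos by (simp add: Nstar_def add_pos_nonneg)

lemma Lam_eq: "Lam b d Phi k = d * Ns k"
proof -
  have "d + b * real k * Phi > 0"
    using b_pos d_pos Phi_pos by (simp add: add_pos_nonneg)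
  then have "1 - Ns k = d / (d + b * real k * Phi)"
    by (simp add: Nstar_def field_simps)
  then show ?thesis
    by (simp add: Lam_def Nstar_def)
qed

lemma dfe_denom_pos: "k \<in> {1..n} \<Longrightarrow> mu k + omega + d > 0"
  using mu_pos[of k] omega_pos d_pos by simp

lemma Sdfe_add_Vdfe: assumes k: "k \<in> {1..n}" shows "Sdfe k + Vdfe k = Ns k"
proof -
  have "Sdfe k + Vdfe k = (mu k + omega + d) * Ns k / (mu k + omega + d)"
    unfolding S0_def V0_def by (simp add: add_divide_distrib[symmetric] algebra_simps)
  then show ?thesis
    using dfe_denom_pos[OF k] by simp
qed

lemma Vdfe_balance: "mu k * Sdfe k = (d + omega) * Vdfe k"
  by (simp add: S0_def V0_def)

lemma Sdfe_balance: assumes k: "k \<in> {1..n}"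
  shows "(mu k + d + gamma) * Sdfe k - (omega - gamma) * Vdfe k = Lam b d Phi k + gamma * Ns k"
proof -
  define m where "m = mu k + omega + d"
  have m: "m \<noteq> 0"
    using dfe_denom_pos[OF k] by (simp add: m_def)
  have "(mu k + d + gamma) * Sdfe k - (omega - gamma) * Vdfe k
      = ((mu k + d + gamma) * (d + omega) - (omega - gamma) * mu k) * Ns k / m"
    using m unfolding S0_def V0_def m_def[symmetric] by (simp add: field_simps)
  also have "(mu k + d + gamma) * (d + omega) - (omega - gamma) * mu k = (d + gamma) * m"
    unfolding m_def by (simp add: algebra_simps)
  also have "(d + gamma) * m * Ns k / m = Lam b d Phi k + gamma * Ns k"
    using m by (simp add: Lam_eq field_simps)
  finally show ?thesis .
qed

definition gain_dfe :: real where
  "gain_dfe = (1 / kmean) * (\<Sum>i=1..n. phi i * p i * lam i * (Sdfe i + delta * Vdfe i))"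

lemma gain_dfe_eq: "gain_dfe = I_exit_rate * R0 n p b d Phi lam phi mu beta gamma omega delta"
proof -
  have summand_eq: "lam i * phi i * p i * Lam b d Phi i * (omega + d + delta * mu i)
        / (d * I_exit_rate * (omega + mu i + d)) = phi i * p i * lam i * (Sdfe i + delta * Vdfe i) / I_exit_rate"
    if i: "i \<in> {1..n}" for i
  proof -
    define m where "m = mu i + omega + d"
    have m: "m \<noteq> 0"
      using dfe_denom_pos[OF i] by (simp add: m_def)
    have cancel: "A * (d * N) * W / (d * c * m) = A * (W * N / m) / c" if "c \<noteq> 0" for A N W c
      using that m d_pos by (simp add: field_simps)
    have "lam i * phi i * p i * Lam b d Phi i * (omega + d + delta * mu i) / (d * I_exit_rate * (omega + mu i + d))
        = lam i * phi i * p i * (d * Ns i) * (omega + d + delta * mu i) / (d * I_exit_rate * m)"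
      by (simp add: Lam_eq m_def add.commute add.left_commute)
    also have "\<dots> = lam i * phi i * p i * ((omega + d + delta * mu i) * Ns i / m) / I_exit_rate"
      using I_exit_rate_pos by (intro cancel) simp
    also have "(omega + d + delta * mu i) * Ns i / m = Sdfe i + delta * Vdfe i"
      using m unfolding S0_def V0_def m_def[symmetric] by (simp add: field_simps)
    finally show ?thesis
      by (simp add: ac_simps)
  qed
  have "(\<Sum>i=1..n. lam i * phi i * p i * Lam b d Phi i * (omega + d + delta * mu i)
        / (d * I_exit_rate * (omega + mu i + d))) = (\<Sum>i=1..n. phi i * p i * lam i * (Sdfe i + delta * Vdfe i)) / I_exit_rate"
    unfolding sum_divide_distrib by (rule sum.cong) (simp_all add: summand_eq)
  then show ?thesis
    unfolding gain_dfe_def R0_def using I_exit_rate_pos by simp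
qed

lemma gain_dfe_lt: "gain_dfe < I_exit_rate"
  using gain_dfe_eq R0_lt_1 I_exit_rate_pos by simp

definition half_gap :: real where
  "half_gap = (I_exit_rate - gain_dfe) / 2"

lemma half_gap_pos: "half_gap > 0"
  using gain_dfe_lt by (simp add: half_gap_def)

definition S_bound_const :: real where
  "S_bound_const = 1 + omega / d"

definition Theta_bound_const :: real where
  "Theta_bound_const = (\<Sum>i=1..n. phi i * p i) / kmean"

definition I_bound_const :: real where
  "I_bound_const = 1 + (\<Sum>i=1..n. lam i * Ns i) * Theta_bound_const / I_exit_rate"

definition Q_bound_const :: real where
  "Q_bound_const = 1 + beta * I_bound_const / d"

definition dist_bound_const :: real where
  "dist_bound_const = 4 * real n * (S_bound_const + 1 + I_bound_const + Q_bound_const)"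

definition stab_radius :: real where
  "stab_radius = half_gap * kmean / ((\<Sum>i=1..n. phi i * p i * lam i) * (S_bound_const + 1))"

lemma Theta_bound_const_nonneg: "Theta_bound_const \<ge> 0"
  unfolding Theta_bound_const_def using kmean_pos phi_pos p_pos
  by (intro divide_nonneg_pos sum_nonneg) (auto intro!: mult_nonneg_nonneg less_imp_le)

lemma delta_mult_le:
  assumes "y \<le> D" "0 \<le> D"
  shows "delta * y \<le> D"
proof (cases "y \<ge> 0")
  case True
  then show ?thesis
    using assms delta mult_left_le_one_le[of y delta] by linarith
next
  case False
  then show ?thesis
    using assms delta mult_nonneg_nonpos[of delta y] by linarith
qed

lemma lam_Nstar_nonneg: "k \<in> {1..n} \<Longrightarrow> lam k * Ns k \<ge> 0"
  using lam_pos[of k] Nstar_nonneg[of k] by simp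

lemma lam_Nstar_le_sum: "k \<in> {1..n} \<Longrightarrow> lam k * Ns k \<le> (\<Sum>i=1..n. lam i * Ns i)"
  using lam_Nstar_nonneg by (intro member_le_sum) auto

lemma bound_consts_ge_1: "S_bound_const \<ge> 1" "I_bound_const \<ge> 1" "Q_bound_const \<ge> 1"
proof -
  have "(\<Sum>i=1..n. lam i * Ns i) \<ge> 0"
    using lam_Nstar_nonneg by (intro sum_nonneg) auto
  then show "I_bound_const \<ge> 1"
    unfolding I_bound_const_def using Theta_bound_const_nonneg I_exit_rate_pos by simp
  then show "Q_bound_const \<ge> 1"
    unfolding Q_bound_const_def using beta_pos d_pos by simp
  show "S_bound_const \<ge> 1"
    unfolding S_bound_const_def using omega_pos d_pos by simp
qed

lemma dist_bound_const_nonneg: "dist_bound_const \<ge> 0"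
  unfolding dist_bound_const_def using bound_consts_ge_1 by simp

lemma stab_radius_pos: "stab_radius > 0"
proof -
  have "(\<Sum>i=1..n. phi i * p i * lam i) > 0"
    using n phi_pos p_pos lam_pos by (intro sum_pos) auto
  then show ?thesis
    unfolding stab_radius_def using half_gap_pos kmean_pos bound_consts_ge_1 by simp
qed

end

locale sviqs_trajectory = sviqs_params +
  fixes S V I Q :: "real \<Rightarrow> nat \<Rightarrow> real"
  assumes solution: "sviqs_solution n p b d Phi lam phi mu beta gamma eta omega delta S V I Q"
    and admissible: "sviqs_admissible n (Nstar b d Phi) (S 0) (V 0) (I 0) (Q 0)"
begin

abbreviation "Th t \<equiv> Theta n p phi (I t)"

definition gain :: "real \<Rightarrow> real" where
  "gain t = (1 / kmean) * (\<Sum>i=1..n. phi i * p i * lam i * (S t i + delta * V t i))"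

context
  fixes t :: real and k :: nat
  assumes t: "t \<ge> 0" and k: "k \<in> {1..n}"
begin

lemma S_deriv: "((\<lambda>s. S s k) has_real_derivative
    Lam b d Phi k - lam k * S t k * Th t + gamma * I t k + eta * Q t k + omega * V t k - (mu k + d) * S t k)
    (at t within {0..})"
  using solution t k unfolding sviqs_solution_def by blast

lemma V_deriv: "((\<lambda>s. V s k) has_real_derivative
    mu k * S t k - delta * lam k * V t k * Th t - (d + omega) * V t k) (at t within {0..})"
  using solution t k unfolding sviqs_solution_def by blast

lemma I_deriv: "((\<lambda>s. I s k) has_real_derivative
    lam k * S t k * Th t + delta * lam k * V t k * Th t - I_exit_rate * I t k) (at t within {0..})"
  using solution t k unfolding sviqs_solution_def by blast

lemma Q_deriv: "((\<lambda>s. Q s k) has_real_derivative beta * I t k - (eta + d) * Q t k) (at t within {0..})"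
  using solution t k unfolding sviqs_solution_def by blast

end

lemma initial_state: "k \<in> {1..n} \<Longrightarrow>
    S 0 k \<ge> 0 \<and> V 0 k \<ge> 0 \<and> I 0 k \<ge> 0 \<and> Q 0 k \<ge> 0 \<and> S 0 k + V 0 k + I 0 k + Q 0 k = Ns k"
  using admissible unfolding sviqs_admissible_def by blast

lemma S_continuous: "k \<in> {1..n} \<Longrightarrow> continuous_on {0..} (\<lambda>t. S t k)"
  by (rule DERIV_continuous_on[OF S_deriv]) auto

lemma V_continuous: "k \<in> {1..n} \<Longrightarrow> continuous_on {0..} (\<lambda>t. V t k)"
  by (rule DERIV_continuous_on[OF V_deriv]) auto

section \<open>Invariance of the feasible region\<close>

lemma class_total: assumes t: "t \<ge> 0" and k: "k \<in> {1..n}"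
  shows "S t k + V t k + I t k + Q t k = Ns k"
proof -
  define z where "z s = S s k + V s k + I s k + Q s k - Ns k" for s
  have z_deriv: "(z has_real_derivative -d * z s) (at s within {0..})" if "s \<ge> 0" for s
  proof -
    have "(z has_real_derivative
        (Lam b d Phi k - lam k * S s k * Th s + gamma * I s k + eta * Q s k + omega * V s k - (mu k + d) * S s k)
      + (mu k * S s k - delta * lam k * V s k * Th s - (d + omega) * V s k)
      + (lam k * S s k * Th s + delta * lam k * V s k * Th s - I_exit_rate * I s k)
      + (beta * I s k - (eta + d) * Q s k) - 0) (at s within {0..})"
      unfolding z_def using that k
      by (intro DERIV_diff DERIV_add S_deriv V_deriv I_deriv Q_deriv DERIV_const)
    then show ?thesis
      by (simp add: z_def Lam_eq eta_eq_gamma algebra_simps)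
  qed
  have "z 0 = 0"
    using initial_state[OF k] by (simp add: z_def)
  moreover have "z t \<le> max (z 0) (0 / d)"
    using linear_diff_ineq_bound[of d z "\<lambda>s. -d * z s" 0 t] d_pos z_deriv t by simp
  moreover have "- z t \<le> max (- z 0) (0 / d)"
    using linear_diff_ineq_bound[of d "\<lambda>s. - z s" "\<lambda>s. - (-d * z s)" 0 t] d_pos DERIV_minus[OF z_deriv] t
    by simp
  ultimately have "z t = 0"
    by simp
  then show ?thesis
    by (simp add: z_def)
qed

lemma Theta_eq: "Th t = (1 / kmean) * (\<Sum>i=1..n. phi i * p i * I t i)"
  by (simp add: Theta_def)

lemma Theta_deriv: assumes t: "t \<ge> 0"
  shows "(Th has_real_derivative (gain t - I_exit_rate) * Th t) (at t within {0..})"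
proof -
  define A where "A = (\<Sum>i=1..n. phi i * p i * lam i * (S t i + delta * V t i))"
  define B where "B = (\<Sum>i=1..n. phi i * p i * I t i)"
  have "((\<lambda>s. (1 / kmean) * (\<Sum>i=1..n. phi i * p i * I s i)) has_real_derivative (1 / kmean) *
      (\<Sum>i=1..n. phi i * p i * (lam i * S t i * Th t + delta * lam i * V t i * Th t - I_exit_rate * I t i)))
      (at t within {0..})"
    by (intro DERIV_cmult DERIV_sum I_deriv[OF t]) auto
  then have deriv: "(Th has_real_derivative (1 / kmean) *
      (\<Sum>i=1..n. phi i * p i * (lam i * S t i * Th t + delta * lam i * V t i * Th t - I_exit_rate * I t i)))
      (at t within {0..})"
    by (simp only: Theta_eq)
  have "(\<Sum>i=1..n. phi i * p i * (lam i * S t i * Th t + delta * lam i * V t i * Th t - I_exit_rate * I t i))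
      = (\<Sum>i=1..n. Th t * (phi i * p i * lam i * (S t i + delta * V t i)) - I_exit_rate * (phi i * p i * I t i))"
    by (rule sum.cong) (simp_all add: algebra_simps)
  also have "\<dots> = Th t * A - I_exit_rate * B"
    unfolding A_def B_def by (simp add: sum_subtractf sum_distrib_left)
  also have "(1 / kmean) * \<dots> = (gain t - I_exit_rate) * Th t"
    using kmean_pos unfolding gain_def A_def[symmetric] Theta_eq B_def[symmetric]
    by (simp add: field_simps)
  finally show ?thesis
    by (rule DERIV_cong[OF deriv])
qed

lemma Theta_nonneg: assumes t: "t \<ge> 0" shows "Th t \<ge> 0"
proof -
  have "continuous_on {0..t} (\<lambda>s. gain s - I_exit_rate)"
    unfolding gain_def
    by (intro continuous_intros continuous_on_subset[OF S_continuous] continuous_on_subset[OF V_continuous]) auto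
  then have "bounded ((\<lambda>s. gain s - I_exit_rate) ` {0..t})"
    by (intro compact_imp_bounded compact_continuous_image) auto
  then obtain M where M: "\<And>s. s \<in> {0..t} \<Longrightarrow> \<bar>gain s - I_exit_rate\<bar> \<le> M"
    unfolding bounded_iff by (metis image_eqI real_norm_def)
  have "Th 0 \<ge> 0"
    using initial_state phi_pos p_pos kmean_pos unfolding Theta_eq
    by (intro mult_nonneg_nonneg sum_nonneg) (auto intro!: mult_nonneg_nonneg less_imp_le)
  then show ?thesis
  proof (rule diff_ineq_preserves_nonneg[of 0 t Th "\<lambda>s. (gain s - I_exit_rate) * Th s" M, rotated 3])
    fix s assume "s \<in> {0..t}" "Th s < 0"
    then show "M * Th s \<le> (gain s - I_exit_rate) * Th s"
      using M[of s] by (intro mult_right_mono_neg) auto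
  qed (use t Theta_deriv in auto)
qed

lemma return_flow_eq: assumes t: "t \<ge> 0" and k: "k \<in> {1..n}"
  shows "gamma * I t k + eta * Q t k = gamma * (Ns k - S t k - V t k)"
proof -
  have "gamma * I t k + eta * Q t k = gamma * (I t k + Q t k)"
    by (simp add: eta_eq_gamma distrib_left)
  also have "I t k + Q t k = Ns k - S t k - V t k"
    using class_total[OF t k] by linarith
  finally show ?thesis .
qed

lemma S_pos_right:
  assumes T: "T \<ge> 0" and k: "k \<in> {1..n}" and SV: "S T k \<ge> 0" "V T k \<ge> 0"
  shows "\<exists>\<epsilon>>0. \<forall>s\<in>{T<..<T+\<epsilon>}. S s k > 0"
proof (rule pos_right_of_deriv[OF S_deriv[OF T k] T])
  \<comment> \<open>Where S vanishes, S' = Lam + gamma N + (omega - gamma) V > 0.\<close>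
  have "gamma * I T k + eta * Q T k = gamma * (Ns k - S T k - V T k)"
    by (rule return_flow_eq[OF T k])
  moreover have "Lam b d Phi k > 0" "gamma * Ns k \<ge> 0" "(omega - gamma) * V T k \<ge> 0"
    using Nstar_pos[OF k] d_pos gamma_pos gamma_le_omega SV by (simp_all add: Lam_eq)
  ultimately show "S T k > 0 \<or> S T k = 0 \<and> Lam b d Phi k - lam k * S T k * Th T + gamma * I T k
      + eta * Q T k + omega * V T k - (mu k + d) * S T k > 0"
    using SV by (cases "S T k = 0") (auto simp: algebra_simps)
qed

lemma V_nonneg_while_S_nonneg:
  assumes T: "T \<ge> 0" "T \<le> t" and k: "k \<in> {1..n}"
    and V_T: "V T k \<ge> 0" and S_nonneg: "\<And>s. s \<in> {T..t} \<Longrightarrow> S s k \<ge> 0"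
  shows "V t k \<ge> 0"
proof (rule diff_ineq_preserves_nonneg[of T t _ _ 0, OF T V_deriv[OF _ k] V_T])
  fix s assume s: "s \<in> {T..t}" and V_neg: "V s k < 0"
  have "mu k * S s k \<ge> 0"
    using mu_pos[OF k] S_nonneg[OF s] by simp
  moreover have "(delta * lam k * Th s) * V s k \<le> 0"
    using delta lam_pos[OF k] Theta_nonneg[of s] s T V_neg by (intro mult_nonneg_nonpos) auto
  moreover have "(d + omega) * V s k \<le> 0"
    using d_pos omega_pos V_neg by (intro mult_nonneg_nonpos) auto
  ultimately show "0 * V s k \<le> mu k * S s k - delta * lam k * V s k * Th s - (d + omega) * V s k"
    by (simp add: ac_simps)
qed (use T in auto)

lemma S_V_nonneg: assumes t: "t \<ge> 0" and k: "k \<in> {1..n}"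
  shows "S t k \<ge> 0 \<and> V t k \<ge> 0"
proof (rule halfline_continuation[OF _ _ t])
  fix T :: real assume T: "T \<ge> 0" and before: "\<forall>s\<in>{0..<T}. S s k \<ge> 0 \<and> V s k \<ge> 0"
  show "S T k \<ge> 0 \<and> V T k \<ge> 0"
  proof (cases "T = 0")
    case True
    then show ?thesis
      using initial_state[OF k] by simp
  next
    case False
    then have closure: "closure {0..<T} = {0..T}" "T \<in> {0..T}"
      using T by simp_all
    have "S T k \<ge> 0"
      by (rule continuous_ge_on_closure[of "{0..<T}"])
        (use closure before in \<open>auto intro: continuous_on_subset[OF S_continuous[OF k]]\<close>)
    moreover have "V T k \<ge> 0"
      by (rule continuous_ge_on_closure[of "{0..<T}"])
        (use closure before in \<open>auto intro: continuous_on_subset[OF V_continuous[OF k]]\<close>)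
    ultimately show ?thesis
      by simp
  qed
next
  fix T :: real assume T: "T \<ge> 0" and upto: "\<forall>s\<in>{0..T}. S s k \<ge> 0 \<and> V s k \<ge> 0"
  then obtain \<epsilon> where \<epsilon>: "\<epsilon> > 0" "\<forall>s\<in>{T<..<T+\<epsilon>}. S s k > 0"
    using S_pos_right[OF T k] by auto
  have "S s k \<ge> 0 \<and> V s k \<ge> 0" if "s \<in> {T<..<T+\<epsilon>}" for s
  proof
    show "S s k \<ge> 0"
      using \<epsilon>(2) that by (simp add: less_imp_le)
    show "V s k \<ge> 0"
    proof (rule V_nonneg_while_S_nonneg[OF T _ k])
      fix r assume "r \<in> {T..s}"
      then show "S r k \<ge> 0"
        using \<epsilon>(2) upto that T by (cases "r = T") (auto simp: less_imp_le)
    qed (use upto T that in auto)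
  qed
  with \<epsilon>(1) show "\<exists>\<epsilon>>0. \<forall>s\<in>{T<..<T+\<epsilon>}. S s k \<ge> 0 \<and> V s k \<ge> 0"
    by blast
qed

lemma S_nonneg: "t \<ge> 0 \<Longrightarrow> k \<in> {1..n} \<Longrightarrow> S t k \<ge> 0"
  using S_V_nonneg by blast

lemma V_nonneg: "t \<ge> 0 \<Longrightarrow> k \<in> {1..n} \<Longrightarrow> V t k \<ge> 0"
  using S_V_nonneg by blast

lemma I_nonneg: assumes t: "t \<ge> 0" and k: "k \<in> {1..n}" shows "I t k \<ge> 0"
proof (rule diff_ineq_preserves_nonneg[of 0 t _ _ "- I_exit_rate", OF _ t I_deriv[OF _ k]])
  fix s assume "s \<in> {0..t}"
  then have "lam k * S s k * Th s \<ge> 0" "delta * lam k * V s k * Th s \<ge> 0"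
    using lam_pos[OF k] S_nonneg[OF _ k] V_nonneg[OF _ k] Theta_nonneg delta by auto
  then show "- I_exit_rate * I s k \<le> lam k * S s k * Th s + delta * lam k * V s k * Th s - I_exit_rate * I s k"
    by (simp add: algebra_simps)
qed (use initial_state[OF k] in auto)

lemma Q_nonneg: assumes t: "t \<ge> 0" and k: "k \<in> {1..n}" shows "Q t k \<ge> 0"
proof (rule diff_ineq_preserves_nonneg[of 0 t _ _ "- (eta + d)", OF _ t Q_deriv[OF _ k]])
  fix s assume "s \<in> {0..t}"
  then have "beta * I s k \<ge> 0"
    using beta_pos I_nonneg[OF _ k] by simp
  then show "- (eta + d) * Q s k \<le> beta * I s k - (eta + d) * Q s k"
    by (simp add: algebra_simps)
qed (use initial_state[OF k] in auto)

section \<open>Global attractivity\<close>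

lemma deviation_sum: assumes "t \<ge> 0" "k \<in> {1..n}"
  shows "(S t k - Sdfe k) + (V t k - Vdfe k) + I t k + Q t k = 0"
  using class_total[OF assms] Sdfe_add_Vdfe[OF assms(2)] by linarith

lemma S_deviation_deriv: assumes t: "t \<ge> 0" and k: "k \<in> {1..n}"
  shows "((\<lambda>s. S s k - Sdfe k) has_real_derivative
    -(mu k + d + gamma) * (S t k - Sdfe k) + (omega - gamma) * (V t k - Vdfe k) - lam k * S t k * Th t)
    (at t within {0..})"
proof -
  have "Lam b d Phi k - lam k * S t k * Th t + gamma * I t k + eta * Q t k + omega * V t k
      - (mu k + d) * S t k - 0
    = (Lam b d Phi k + gamma * Ns k) - (mu k + d + gamma) * S t k + (omega - gamma) * V t k - lam k * S t k * Th t"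
    using return_flow_eq[OF t k] by (simp add: algebra_simps)
  also have "\<dots> = -(mu k + d + gamma) * (S t k - Sdfe k) + (omega - gamma) * (V t k - Vdfe k) - lam k * S t k * Th t"
    unfolding Sdfe_balance[OF k, symmetric] by (simp add: algebra_simps)
  finally show ?thesis
    by (rule DERIV_cong[OF DERIV_diff[OF S_deriv[OF t k] DERIV_const]])
qed

lemma V_deviation_deriv: assumes t: "t \<ge> 0" and k: "k \<in> {1..n}"
  shows "((\<lambda>s. V s k - Vdfe k) has_real_derivative
    -(mu k + d + omega) * (V t k - Vdfe k) - (mu k * (I t k + Q t k) + delta * lam k * Th t * V t k))
    (at t within {0..})"
proof -
  have "mu k * S t k = mu k * Sdfe k + mu k * Vdfe k - mu k * V t k - mu k * (I t k + Q t k)"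
    using class_total[OF t k] Sdfe_add_Vdfe[OF k]
    by (metis add_diff_cancel_left' add_diff_eq diff_diff_eq2 right_diff_distrib)
  then have "mu k * S t k - delta * lam k * V t k * Th t - (d + omega) * V t k - 0
    = -(mu k + d + omega) * (V t k - Vdfe k) - (mu k * (I t k + Q t k) + delta * lam k * Th t * V t k)"
    using Vdfe_balance[of k] by (simp add: algebra_simps)
  then show ?thesis
    by (rule DERIV_cong[OF DERIV_diff[OF V_deriv[OF t k] DERIV_const]])
qed

lemma gain_minus_dfe:
  "gain t - gain_dfe = (1 / kmean) * (\<Sum>i=1..n. phi i * p i * lam i * ((S t i - Sdfe i) + delta * (V t i - Vdfe i)))"
proof -
  have "(\<Sum>i=1..n. phi i * p i * lam i * (S t i + delta * V t i))
      - (\<Sum>i=1..n. phi i * p i * lam i * (Sdfe i + delta * Vdfe i))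
    = (\<Sum>i=1..n. phi i * p i * lam i * ((S t i - Sdfe i) + delta * (V t i - Vdfe i)))"
    unfolding sum_subtractf[symmetric] by (rule sum.cong) (simp_all add: algebra_simps)
  then show ?thesis
    unfolding gain_def gain_dfe_def by (simp add: diff_divide_distrib[symmetric])
qed

lemma V_deviation_limsup: assumes k: "k \<in> {1..n}" shows "limsup_nonpos (\<lambda>t. V t k - Vdfe k)"
proof (rule linear_diff_ineq_limsup_nonpos[OF _ V_deviation_deriv[OF _ k] _ limsup_nonpos_zero])
  show "mu k + d + omega > 0"
    using dfe_denom_pos[OF k] by simp
  show "eventually (\<lambda>t. -(mu k + d + omega) * (V t k - Vdfe k)
      - (mu k * (I t k + Q t k) + delta * lam k * Th t * V t k) \<le> -(mu k + d + omega) * (V t k - Vdfe k) + 0) at_top"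
  proof (rule eventually_at_top_linorderI[of 0])
    fix t :: real assume "t \<ge> 0"
    then have "mu k * (I t k + Q t k) + delta * lam k * Th t * V t k \<ge> 0"
      using mu_pos[OF k] I_nonneg[OF _ k] Q_nonneg[OF _ k] delta lam_pos[OF k] Theta_nonneg V_nonneg[OF _ k]
      by (intro add_nonneg_nonneg mult_nonneg_nonneg) auto
    then show "-(mu k + d + omega) * (V t k - Vdfe k) - (mu k * (I t k + Q t k) + delta * lam k * Th t * V t k)
        \<le> -(mu k + d + omega) * (V t k - Vdfe k) + 0"
      by simp
  qed
qed

lemma S_deviation_limsup: assumes k: "k \<in> {1..n}" shows "limsup_nonpos (\<lambda>t. S t k - Sdfe k)"
proof (rule linear_diff_ineq_limsup_nonpos[OF _ S_deviation_deriv[OF _ k]])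
  show "mu k + d + gamma > 0"
    using mu_pos[OF k] d_pos gamma_pos by simp
  show "limsup_nonpos (\<lambda>t. (omega - gamma) * (V t k - Vdfe k))"
    using gamma_le_omega by (intro limsup_nonpos_cmult V_deviation_limsup[OF k]) simp
  show "eventually (\<lambda>t. -(mu k + d + gamma) * (S t k - Sdfe k) + (omega - gamma) * (V t k - Vdfe k)
      - lam k * S t k * Th t \<le> -(mu k + d + gamma) * (S t k - Sdfe k) + (omega - gamma) * (V t k - Vdfe k)) at_top"
    using lam_pos[OF k] S_nonneg[OF _ k] Theta_nonneg by (intro eventually_at_top_linorderI[of 0]) simp
qed

lemma gain_eventually_le: "eventually (\<lambda>t. gain t \<le> I_exit_rate - half_gap) at_top"
proof -
  have "limsup_nonpos (\<lambda>t. (1 / kmean) * (\<Sum>i=1..n. phi i * p i * lam i *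
      ((S t i - Sdfe i) + delta * (V t i - Vdfe i))))"
    using kmean_pos phi_pos p_pos lam_pos delta
    by (intro limsup_nonpos_cmult limsup_nonpos_sum limsup_nonpos_add S_deviation_limsup V_deviation_limsup)
      (auto intro!: mult_nonneg_nonneg less_imp_le)
  then have "eventually (\<lambda>t. gain t - gain_dfe \<le> half_gap) at_top"
    unfolding gain_minus_dfe using half_gap_pos by (rule limsup_nonposD)
  moreover have "gain_dfe + half_gap = I_exit_rate - half_gap"
    by (simp add: half_gap_def field_simps)
  ultimately show ?thesis
    by (auto elim: eventually_mono)
qed

lemma Theta_limsup: "limsup_nonpos Th"
proof (rule linear_diff_ineq_limsup_nonpos[OF half_gap_pos Theta_deriv _ limsup_nonpos_zero])
  show "eventually (\<lambda>t. (gain t - I_exit_rate) * Th t \<le> - half_gap * Th t + 0) at_top"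
    using gain_eventually_le eventually_ge_at_top[of 0]
  proof eventually_elim
    case (elim t)
    then show ?case
      using mult_right_mono[of "gain t - I_exit_rate" "- half_gap" "Th t"] Theta_nonneg[of t] by simp
  qed
qed

lemma I_limsup: assumes k: "k \<in> {1..n}" shows "limsup_nonpos (\<lambda>t. I t k)"
proof (rule linear_diff_ineq_limsup_nonpos[OF I_exit_rate_pos I_deriv[OF _ k]])
  show "limsup_nonpos (\<lambda>t. lam k * Ns k * Th t)"
    using lam_pos[OF k] Nstar_nonneg by (intro limsup_nonpos_cmult Theta_limsup) simp
  have "lam k * Th t * (S t k + delta * V t k) \<le> lam k * Th t * Ns k" if "t \<ge> 0" for t
  proof (rule mult_left_mono)
    have "delta * V t k \<le> V t k"
      using delta V_nonneg[OF that k] by (simp add: mult_left_le_one_le)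
    then show "S t k + delta * V t k \<le> Ns k"
      using class_total[OF that k] I_nonneg[OF that k] Q_nonneg[OF that k] by linarith
  qed (use that lam_pos[OF k] Theta_nonneg in simp)
  then show "eventually (\<lambda>t. lam k * S t k * Th t + delta * lam k * V t k * Th t - I_exit_rate * I t k
      \<le> - I_exit_rate * I t k + lam k * Ns k * Th t) at_top"
    by (intro eventually_at_top_linorderI[of 0]) (simp add: algebra_simps)
qed

lemma Q_limsup: assumes k: "k \<in> {1..n}" shows "limsup_nonpos (\<lambda>t. Q t k)"
proof (rule linear_diff_ineq_limsup_nonpos[OF _ Q_deriv[OF _ k]])
  show "eta + d > 0"
    using eta_eq_gamma gamma_pos d_pos by simp
  show "limsup_nonpos (\<lambda>t. beta * I t k)"
    using beta_pos by (intro limsup_nonpos_cmult I_limsup[OF k]) simp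
  show "eventually (\<lambda>t. beta * I t k - (eta + d) * Q t k \<le> - (eta + d) * Q t k + beta * I t k) at_top"
    by (simp add: algebra_simps)
qed simp

lemma tendsto_dfe: assumes k: "k \<in> {1..n}"
  shows "((\<lambda>t. S t k) \<longlongrightarrow> Sdfe k) at_top" "((\<lambda>t. V t k) \<longlongrightarrow> Vdfe k) at_top"
    "((\<lambda>t. I t k) \<longlongrightarrow> 0) at_top" "((\<lambda>t. Q t k) \<longlongrightarrow> 0) at_top"
proof -
  have I_lower: "limsup_nonpos (\<lambda>t. - I t k)"
    by (rule limsup_nonpos_mono[OF eventually_at_top_linorderI[of 0] limsup_nonpos_zero])
      (use I_nonneg[OF _ k] in simp)
  have Q_lower: "limsup_nonpos (\<lambda>t. - Q t k)"
    by (rule limsup_nonpos_mono[OF eventually_at_top_linorderI[of 0] limsup_nonpos_zero])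
      (use Q_nonneg[OF _ k] in simp)
  have S_lower: "limsup_nonpos (\<lambda>t. - (S t k - Sdfe k))"
  proof (rule limsup_nonpos_mono)
    show "limsup_nonpos (\<lambda>t. (V t k - Vdfe k) + I t k + Q t k)"
      by (intro limsup_nonpos_add V_deviation_limsup I_limsup Q_limsup k)
    show "eventually (\<lambda>t. - (S t k - Sdfe k) \<le> (V t k - Vdfe k) + I t k + Q t k) at_top"
    proof (rule eventually_at_top_linorderI[of 0])
      fix t :: real assume "t \<ge> 0"
      from deviation_sum[OF this k] show "- (S t k - Sdfe k) \<le> (V t k - Vdfe k) + I t k + Q t k"
        by linarith
    qed
  qed
  have V_lower: "limsup_nonpos (\<lambda>t. - (V t k - Vdfe k))"
  proof (rule limsup_nonpos_mono)
    show "limsup_nonpos (\<lambda>t. (S t k - Sdfe k) + I t k + Q t k)"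
      by (intro limsup_nonpos_add S_deviation_limsup I_limsup Q_limsup k)
    show "eventually (\<lambda>t. - (V t k - Vdfe k) \<le> (S t k - Sdfe k) + I t k + Q t k) at_top"
    proof (rule eventually_at_top_linorderI[of 0])
      fix t :: real assume "t \<ge> 0"
      from deviation_sum[OF this k] show "- (V t k - Vdfe k) \<le> (S t k - Sdfe k) + I t k + Q t k"
        by linarith
    qed
  qed
  show "((\<lambda>t. S t k) \<longlongrightarrow> Sdfe k) at_top"
    using tendsto_zero_if_limsup_nonpos[OF S_deviation_limsup[OF k] S_lower] by (simp add: LIM_zero_iff)
  show "((\<lambda>t. V t k) \<longlongrightarrow> Vdfe k) at_top"
    using tendsto_zero_if_limsup_nonpos[OF V_deviation_limsup[OF k] V_lower] by (simp add: LIM_zero_iff)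
  show "((\<lambda>t. I t k) \<longlongrightarrow> 0) at_top"
    by (rule tendsto_zero_if_limsup_nonpos[OF I_limsup[OF k] I_lower])
  show "((\<lambda>t. Q t k) \<longlongrightarrow> 0) at_top"
    by (rule tendsto_zero_if_limsup_nonpos[OF Q_limsup[OF k] Q_lower])
qed

section \<open>Lyapunov stability\<close>

abbreviation "dist0 \<equiv> dist_dfe n Sdfe Vdfe (S 0) (V 0) (I 0) (Q 0)"

lemma dist0_nonneg: "dist0 \<ge> 0"
  unfolding dist_dfe_def by (intro sum_nonneg) auto

lemma initial_deviation_le: assumes k: "k \<in> {1..n}"
  shows "\<bar>S 0 k - Sdfe k\<bar> \<le> dist0" "\<bar>V 0 k - Vdfe k\<bar> \<le> dist0" "I 0 k \<le> dist0" "Q 0 k \<le> dist0"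
proof -
  have "\<bar>S 0 k - Sdfe k\<bar> + \<bar>V 0 k - Vdfe k\<bar> + \<bar>I 0 k\<bar> + \<bar>Q 0 k\<bar> \<le> dist0"
    unfolding dist_dfe_def using k by (intro member_le_sum) auto
  then show "\<bar>S 0 k - Sdfe k\<bar> \<le> dist0" "\<bar>V 0 k - Vdfe k\<bar> \<le> dist0" "I 0 k \<le> dist0" "Q 0 k \<le> dist0"
    by auto
qed

lemma V_deviation_le: assumes t: "t \<ge> 0" and k: "k \<in> {1..n}" shows "V t k - Vdfe k \<le> dist0"
proof -
  have "V t k - Vdfe k \<le> max (V 0 k - Vdfe k) (0 / (mu k + d + omega))"
  proof (rule linear_diff_ineq_bound[OF _ V_deviation_deriv[OF _ k] _ t])
    show "mu k + d + omega > 0"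
      using dfe_denom_pos[OF k] by simp
    fix s :: real assume "s \<ge> 0"
    then have "mu k * (I s k + Q s k) + delta * lam k * Th s * V s k \<ge> 0"
      using mu_pos[OF k] I_nonneg[OF _ k] Q_nonneg[OF _ k] delta lam_pos[OF k] Theta_nonneg V_nonneg[OF _ k]
      by (intro add_nonneg_nonneg mult_nonneg_nonneg) auto
    then show "-(mu k + d + omega) * (V s k - Vdfe k) - (mu k * (I s k + Q s k) + delta * lam k * Th s * V s k)
        \<le> -(mu k + d + omega) * (V s k - Vdfe k) + 0"
      by simp
  qed
  then show ?thesis
    using initial_deviation_le[OF k] dist0_nonneg by simp
qed

lemma S_deviation_le: assumes t: "t \<ge> 0" and k: "k \<in> {1..n}" shows "S t k - Sdfe k \<le> S_bound_const * dist0"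
proof -
  have rate: "mu k + d + gamma > 0"
    using mu_pos[OF k] d_pos gamma_pos by simp
  have "S t k - Sdfe k \<le> max (S 0 k - Sdfe k) ((omega - gamma) * dist0 / (mu k + d + gamma))"
  proof (rule linear_diff_ineq_bound[OF rate S_deviation_deriv[OF _ k] _ t])
    fix s :: real assume s: "s \<ge> 0"
    have "(omega - gamma) * (V s k - Vdfe k) \<le> (omega - gamma) * dist0"
      using V_deviation_le[OF s k] gamma_le_omega by (intro mult_left_mono) auto
    moreover have "lam k * S s k * Th s \<ge> 0"
      using lam_pos[OF k] S_nonneg[OF s k] Theta_nonneg[OF s] by simp
    ultimately show "-(mu k + d + gamma) * (S s k - Sdfe k) + (omega - gamma) * (V s k - Vdfe k)
        - lam k * S s k * Th s \<le> -(mu k + d + gamma) * (S s k - Sdfe k) + (omega - gamma) * dist0"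
      by linarith
  qed
  also have "\<dots> \<le> S_bound_const * dist0"
    unfolding S_bound_const_def
  proof (rule max_le_one_plus_mult)
    have "(omega - gamma) * dist0 / (mu k + d + gamma) \<le> omega * dist0 / d"
      using gamma_pos gamma_le_omega dist0_nonneg rate mu_pos[OF k] d_pos
      by (intro frac_le mult_right_mono) auto
    then show "(omega - gamma) * dist0 / (mu k + d + gamma) \<le> omega / d * dist0"
      by simp
  qed (use initial_deviation_le[OF k] dist0_nonneg omega_pos d_pos in auto)
  finally show ?thesis .
qed

lemma gain_le_near_dfe: assumes close: "dist0 \<le> stab_radius" and t: "t \<ge> 0"
  shows "gain t \<le> I_exit_rate - half_gap"
proof -
  define W where "W = (\<Sum>i=1..n. phi i * p i * lam i)"
  have W: "W > 0"
    unfolding W_def using n phi_pos p_pos lam_pos by (intro sum_pos) auto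
  have "(\<Sum>i=1..n. phi i * p i * lam i * ((S t i - Sdfe i) + delta * (V t i - Vdfe i)))
      \<le> (\<Sum>i=1..n. phi i * p i * lam i * ((S_bound_const + 1) * dist0))"
  proof (rule sum_mono, rule mult_left_mono)
    fix i assume i: "i \<in> {1..n}"
    have "delta * (V t i - Vdfe i) \<le> dist0"
      by (rule delta_mult_le[OF V_deviation_le[OF t i] dist0_nonneg])
    then show "(S t i - Sdfe i) + delta * (V t i - Vdfe i) \<le> (S_bound_const + 1) * dist0"
      using S_deviation_le[OF t i] by (simp add: distrib_right)
    show "phi i * p i * lam i \<ge> 0"
      using phi_pos[OF i] p_pos[OF i] lam_pos[OF i] by simp
  qed
  also have "\<dots> = W * ((S_bound_const + 1) * dist0)"
    unfolding W_def by (simp add: sum_distrib_right)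
  also have "\<dots> \<le> W * ((S_bound_const + 1) * stab_radius)"
    using close W bound_consts_ge_1 by (intro mult_left_mono) auto
  also have "\<dots> = half_gap * kmean"
    unfolding stab_radius_def W_def[symmetric] using W bound_consts_ge_1 by simp
  finally have "gain t - gain_dfe \<le> half_gap"
    unfolding gain_minus_dfe using kmean_pos by (simp add: field_simps)
  then show ?thesis
    by (simp add: half_gap_def field_simps)
qed

lemma Theta_le: assumes close: "dist0 \<le> stab_radius" and t: "t \<ge> 0"
  shows "Th t \<le> Theta_bound_const * dist0"
proof -
  have "Th t \<le> max (Th 0) (0 / half_gap)"
  proof (rule linear_diff_ineq_bound[OF half_gap_pos Theta_deriv _ t])
    fix s :: real assume s: "s \<ge> 0"
    show "(gain s - I_exit_rate) * Th s \<le> - half_gap * Th s + 0"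
      using mult_right_mono[OF _ Theta_nonneg[OF s], of "gain s - I_exit_rate" "- half_gap"]
        gain_le_near_dfe[OF close s] by simp
  qed
  moreover have "Th 0 \<le> Theta_bound_const * dist0"
  proof -
    have "(\<Sum>i=1..n. phi i * p i * I 0 i) \<le> (\<Sum>i=1..n. phi i * p i * dist0)"
    proof (rule sum_mono)
      fix i assume i: "i \<in> {1..n}"
      show "phi i * p i * I 0 i \<le> phi i * p i * dist0"
        using initial_deviation_le[OF i] phi_pos[OF i] p_pos[OF i] by (intro mult_left_mono) auto
    qed
    then show ?thesis
      unfolding Theta_eq Theta_bound_const_def using kmean_pos by (simp add: sum_distrib_right divide_right_mono)
  qed
  moreover have "0 \<le> Theta_bound_const * dist0"
    using Theta_bound_const_nonneg dist0_nonneg by simp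
  ultimately show ?thesis
    by simp
qed

lemma I_le: assumes close: "dist0 \<le> stab_radius" and t: "t \<ge> 0" and k: "k \<in> {1..n}"
  shows "I t k \<le> I_bound_const * dist0"
proof -
  have "I t k \<le> max (I 0 k) (lam k * Ns k * (Theta_bound_const * dist0) / I_exit_rate)"
  proof (rule linear_diff_ineq_bound[OF I_exit_rate_pos I_deriv[OF _ k] _ t])
    fix s :: real assume s: "s \<ge> 0"
    have "delta * V s k \<le> V s k"
      using delta V_nonneg[OF s k] by (simp add: mult_left_le_one_le)
    then have "S s k + delta * V s k \<le> Ns k"
      using class_total[OF s k] I_nonneg[OF s k] Q_nonneg[OF s k] by linarith
    then have "(lam k * Th s) * (S s k + delta * V s k) \<le> (lam k * Th s) * Ns k"
      using lam_pos[OF k] Theta_nonneg[OF s] by (intro mult_left_mono) auto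
    also have "\<dots> = (lam k * Ns k) * Th s"
      by (simp add: ac_simps)
    also have "\<dots> \<le> (lam k * Ns k) * (Theta_bound_const * dist0)"
      using Theta_le[OF close s] lam_pos[OF k] Nstar_nonneg by (intro mult_left_mono) auto
    finally show "lam k * S s k * Th s + delta * lam k * V s k * Th s - I_exit_rate * I s k
        \<le> - I_exit_rate * I s k + lam k * Ns k * (Theta_bound_const * dist0)"
      by (simp add: algebra_simps)
  qed
  also have "\<dots> \<le> I_bound_const * dist0"
    unfolding I_bound_const_def
  proof (rule max_le_one_plus_mult)
    have "lam k * Ns k * (Theta_bound_const * dist0) / I_exit_rate \<le> (\<Sum>i=1..n. lam i * Ns i) * (Theta_bound_const * dist0) / I_exit_rate"
      using lam_Nstar_le_sum[OF k] Theta_bound_const_nonneg dist0_nonneg I_exit_rate_pos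
      by (intro divide_right_mono mult_right_mono) auto
    then show "lam k * Ns k * (Theta_bound_const * dist0) / I_exit_rate
        \<le> (\<Sum>i=1..n. lam i * Ns i) * Theta_bound_const / I_exit_rate * dist0"
      by simp
  qed (use initial_deviation_le[OF k] dist0_nonneg Theta_bound_const_nonneg I_exit_rate_pos bound_consts_ge_1 in
        \<open>auto simp: I_bound_const_def\<close>)
  finally show ?thesis .
qed

lemma Q_le: assumes close: "dist0 \<le> stab_radius" and t: "t \<ge> 0" and k: "k \<in> {1..n}"
  shows "Q t k \<le> Q_bound_const * dist0"
proof -
  have rate: "eta + d > 0"
    using eta_eq_gamma gamma_pos d_pos by simp
  have "Q t k \<le> max (Q 0 k) (beta * (I_bound_const * dist0) / (eta + d))"
  proof (rule linear_diff_ineq_bound[OF rate Q_deriv[OF _ k] _ t])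
    fix s :: real assume s: "s \<ge> 0"
    have "beta * I s k \<le> beta * (I_bound_const * dist0)"
      using I_le[OF close s k] beta_pos by simp
    then show "beta * I s k - (eta + d) * Q s k \<le> - (eta + d) * Q s k + beta * (I_bound_const * dist0)"
      by (simp add: algebra_simps)
  qed
  also have "\<dots> \<le> Q_bound_const * dist0"
    unfolding Q_bound_const_def
  proof (rule max_le_one_plus_mult)
    have "beta * (I_bound_const * dist0) / (eta + d) \<le> beta * (I_bound_const * dist0) / d"
      using beta_pos bound_consts_ge_1 dist0_nonneg d_pos eta_eq_gamma gamma_pos
      by (intro divide_left_mono) auto
    then show "beta * (I_bound_const * dist0) / (eta + d) \<le> beta * I_bound_const / d * dist0"
      by simp
  qed (use initial_deviation_le[OF k] dist0_nonneg beta_pos bound_consts_ge_1 d_pos in auto)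
  finally show ?thesis .
qed

lemma dist_dfe_le: assumes close: "dist0 \<le> stab_radius" and t: "t \<ge> 0"
  shows "dist_dfe n Sdfe Vdfe (S t) (V t) (I t) (Q t) \<le> dist_bound_const * dist0"
proof -
  define C where "C = S_bound_const + 1 + I_bound_const + Q_bound_const"
  have class_le: "\<bar>S t k - Sdfe k\<bar> + \<bar>V t k - Vdfe k\<bar> + \<bar>I t k\<bar> + \<bar>Q t k\<bar> \<le> 4 * C * dist0"
    if k: "k \<in> {1..n}" for k
  proof -
    have bounds: "S t k - Sdfe k \<le> S_bound_const * dist0" "V t k - Vdfe k \<le> dist0"
      "0 \<le> I t k" "I t k \<le> I_bound_const * dist0" "0 \<le> Q t k" "Q t k \<le> Q_bound_const * dist0"
      using S_deviation_le[OF t k] V_deviation_le[OF t k] I_nonneg[OF t k] I_le[OF close t k]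
        Q_nonneg[OF t k] Q_le[OF close t k] by auto
    have "S_bound_const * dist0 \<ge> 0" "I_bound_const * dist0 \<ge> 0" "Q_bound_const * dist0 \<ge> 0"
      using bound_consts_ge_1 dist0_nonneg by simp_all
    moreover have CD: "C * dist0 = S_bound_const * dist0 + dist0 + I_bound_const * dist0 + Q_bound_const * dist0"
      unfolding C_def by (simp add: algebra_simps)
    ultimately have "\<bar>S t k - Sdfe k\<bar> \<le> C * dist0" "\<bar>V t k - Vdfe k\<bar> \<le> C * dist0"
      "\<bar>I t k\<bar> \<le> C * dist0" "\<bar>Q t k\<bar> \<le> C * dist0"
      using bounds deviation_sum[OF t k] dist0_nonneg unfolding abs_le_iff by linarith+
    then show ?thesis
      by linarith
  qed
  have "dist_dfe n Sdfe Vdfe (S t) (V t) (I t) (Q t) \<le> real (card {1..n}) * (4 * C * dist0)"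
    unfolding dist_dfe_def[of n Sdfe Vdfe "S t"] by (rule sum_bounded_above) (rule class_le)
  then show ?thesis
    unfolding dist_bound_const_def C_def by (simp add: algebra_simps)
qed

end

context sviqs_params
begin

lemma trajectoryI:
  assumes "sviqs_solution n p b d Phi lam phi mu beta gamma eta omega delta S V I Q"
    and "sviqs_admissible n (Nstar b d Phi) (S 0) (V 0) (I 0) (Q 0)"
  shows "sviqs_trajectory n p b d Phi lam phi mu beta gamma eta omega delta S V I Q"
  using assms by (intro sviqs_trajectory.intro sviqs_params_axioms sviqs_trajectory_axioms.intro)

lemma dfe_lyapunov_stable:
  assumes \<epsilon>: "\<epsilon> > 0"
  shows "\<exists>r>0. \<forall>S V I Q.
    sviqs_solution n p b d Phi lam phi mu beta gamma eta omega delta S V I Q \<and>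
    sviqs_admissible n (Nstar b d Phi) (S 0) (V 0) (I 0) (Q 0) \<and>
    dist_dfe n Sdfe Vdfe (S 0) (V 0) (I 0) (Q 0) < r
    \<longrightarrow> (\<forall>t\<ge>0. dist_dfe n Sdfe Vdfe (S t) (V t) (I t) (Q t) < \<epsilon>)"
proof (intro exI[of _ "min stab_radius (\<epsilon> / (dist_bound_const + 1))"] conjI allI impI)
  show "min stab_radius (\<epsilon> / (dist_bound_const + 1)) > 0"
    using stab_radius_pos dist_bound_const_nonneg \<epsilon> by simp
  fix S V I Q and t :: real
  assume H: "sviqs_solution n p b d Phi lam phi mu beta gamma eta omega delta S V I Q \<and>
    sviqs_admissible n (Nstar b d Phi) (S 0) (V 0) (I 0) (Q 0) \<and>
    dist_dfe n Sdfe Vdfe (S 0) (V 0) (I 0) (Q 0) < min stab_radius (\<epsilon> / (dist_bound_const + 1))"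
    and t: "t \<ge> 0"
  interpret X: sviqs_trajectory n p b d Phi lam phi mu beta gamma eta omega delta S V I Q
    using H by (intro trajectoryI) auto
  have "dist_dfe n Sdfe Vdfe (S t) (V t) (I t) (Q t) \<le> dist_bound_const * X.dist0"
    using H t by (intro X.dist_dfe_le) auto
  also have "\<dots> \<le> dist_bound_const * (\<epsilon> / (dist_bound_const + 1))"
    using H dist_bound_const_nonneg by (intro mult_left_mono) auto
  also have "\<dots> < \<epsilon>"
    using dist_bound_const_nonneg \<epsilon> by (simp add: field_simps)
  finally show "dist_dfe n Sdfe Vdfe (S t) (V t) (I t) (Q t) < \<epsilon>" .
qed

lemma dfe_attractive:
  assumes "sviqs_solution n p b d Phi lam phi mu beta gamma eta omega delta S V I Q"
    and "sviqs_admissible n (Nstar b d Phi) (S 0) (V 0) (I 0) (Q 0)" and "k \<in> {1..n}"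
  shows "((\<lambda>t. S t k) \<longlongrightarrow> Sdfe k) at_top \<and> ((\<lambda>t. V t k) \<longlongrightarrow> Vdfe k) at_top \<and>
    ((\<lambda>t. I t k) \<longlongrightarrow> 0) at_top \<and> ((\<lambda>t. Q t k) \<longlongrightarrow> 0) at_top"
  using sviqs_trajectory.tendsto_dfe[OF trajectoryI[OF assms(1,2)] assms(3)] by blast

end

theorem theorem4p8:
  fixes n :: nat and p :: "nat \<Rightarrow> real" and b d Phi :: real
    and lam phi mu :: "nat \<Rightarrow> real" and beta gamma eta omega delta :: real
  assumes n: "n \<ge> 1"
    and p_pos: "\<forall>k\<in>{1..n}. p k > 0"
    and p_sum: "(\<Sum>k=1..n. p k) = 1"
    and bd: "b > d" "d > 0"
    and Phi_pos: "Phi > 0"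
    and Phi_eq: "Phi = (1 / avg_deg n p) * (\<Sum>i=1..n. real i * p i * b * Phi / (d + b * real i * Phi))"
    and lam_pos: "\<forall>k\<in>{1..n}. lam k > 0"
    and phi_pos: "\<forall>k\<in>{1..n}. phi k > 0"
    and mu_pos: "\<forall>k\<in>{1..n}. mu k > 0"
    and consts_pos: "beta > 0" "gamma > 0" "eta > 0" "omega > 0"
    and delta: "0 \<le> delta" "delta \<le> 1"
    and omega_eta: "omega \<ge> eta" and eta_gamma: "eta = gamma"
    and R0_lt: "R0 n p b d Phi lam phi mu beta gamma omega delta < 1"
  shows
    \<comment> \<open>Lyapunov stability (for solutions starting in the admissible region)\<close>
    "(\<forall>\<epsilon>>0. \<exists>\<delta>'>0. \<forall>S V I Q.
        sviqs_solution n p b d Phi lam phi mu beta gamma eta omega delta S V I Q \<and>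
        sviqs_admissible n (Nstar b d Phi) (S 0) (V 0) (I 0) (Q 0) \<and>
        dist_dfe n (S0 b d Phi mu omega) (V0 b d Phi mu omega) (S 0) (V 0) (I 0) (Q 0) < \<delta>'
        \<longrightarrow> (\<forall>t\<ge>0. dist_dfe n (S0 b d Phi mu omega) (V0 b d Phi mu omega) (S t) (V t) (I t) (Q t) < \<epsilon>))
     \<and>
    \<comment> \<open>global attractivity\<close>
     (\<forall>S V I Q.
        sviqs_solution n p b d Phi lam phi mu beta gamma eta omega delta S V I Q \<and>
        sviqs_admissible n (Nstar b d Phi) (S 0) (V 0) (I 0) (Q 0)
        \<longrightarrow> (\<forall>k\<in>{1..n}.
              ((\<lambda>t. S t k) \<longlongrightarrow> S0 b d Phi mu omega k) at_top \<and>
              ((\<lambda>t. V t k) \<longlongrightarrow> V0 b d Phi mu omega k) at_top \<and>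
              ((\<lambda>t. I t k) \<longlongrightarrow> 0) at_top \<and>
              ((\<lambda>t. Q t k) \<longlongrightarrow> 0) at_top))"
proof -
  interpret sviqs_params n p b d Phi lam phi mu beta gamma eta omega delta
    using assms by unfold_locales auto
  show ?thesis
    using dfe_lyapunov_stable dfe_attractive by blast
qed

end
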